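(* There is an absolute constant $C > 0$ such that for all positive integers $n, k$ with $n \ge 3k$ there exist a positive integer $m$, a constant $H>0$, and a set $\Pi$ of linear-programming instances $\pi = (\bm{c}, \bm{A}, \bm{b}) \in \mathbb{R}^n \times \mathbb{R}^{m\times n} \times \mathbb{R}^m$ (each representing the LP $\max\{\bm{c}^\top \bm{x} : \bm{A}\bm{x} \le \bm{b}\}$) such that for every $\pi\in\Pi$, $\bm{x}=\mathbf{0}_n$ is feasible and the optimal value is at most $H$, and such that the class $\mathcal{U} = \{u(\bm{P}, \cdot) : \Pi \to \mathbb{R} \mid \bm{P} \in \mathbb{R}^{n\times k}\}$, where $u(\bm{P}, \pi) = \max\{\bm{c}^\top \bm{P}\bm{y} : \bm{A}\bm{P}\bm{y} \le \bm{b},\ \bm{y} \in \mathbb{R}^k\}$, satisfies $\mathrm{pdim}(\mathcal{U}) \ge C\, nk$. *)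

theory Defs
  imports "HOL-Analysis.Analysis"
begin

text \<open>Dimensions vary inside the statement, so vectors in R^d are functions
  nat => real (entries with index >= d are ignored / required to be zero),
  and matrices in R^(p x q) are functions nat => nat => real.\<close>

type_synonym lp_instance = "(nat \<Rightarrow> real) \<times> (nat \<Rightarrow> nat \<Rightarrow> real) \<times> (nat \<Rightarrow> real)"

definition lp_instances :: "nat \<Rightarrow> nat \<Rightarrow> lp_instance set" where
  "lp_instances n m = {(c, A, b).
      (\<forall>j. n \<le> j \<longrightarrow> c j = 0) \<and>
      (\<forall>i j. (m \<le> i \<or> n \<le> j) \<longrightarrow> A i j = 0) \<and>
      (\<forall>i. m \<le> i \<longrightarrow> b i = 0)}"

definition matrices :: "nat \<Rightarrow> nat \<Rightarrow> (nat \<Rightarrow> nat \<Rightarrow> real) set" where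
  "matrices p q = {P. \<forall>i j. (p \<le> i \<or> q \<le> j) \<longrightarrow> P i j = 0}"

definition lp_feasible :: "nat \<Rightarrow> nat \<Rightarrow> lp_instance \<Rightarrow> (nat \<Rightarrow> real) \<Rightarrow> bool" where
  "lp_feasible n m \<pi> x = (case \<pi> of (c, A, b) \<Rightarrow> (\<forall>i<m. (\<Sum>j<n. A i j * x j) \<le> b i))"

definition lp_value :: "nat \<Rightarrow> nat \<Rightarrow> lp_instance \<Rightarrow> ereal" where
  "lp_value n m \<pi> = (case \<pi> of (c, A, b) \<Rightarrow>
      Sup {ereal (\<Sum>j<n. c j * x j) | x. lp_feasible n m \<pi> x})"

definition proj_value :: "nat \<Rightarrow> nat \<Rightarrow> nat \<Rightarrow> (nat \<Rightarrow> nat \<Rightarrow> real) \<Rightarrow> lp_instance \<Rightarrow> real" where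
  "proj_value n k m P \<pi> = (case \<pi> of (c, A, b) \<Rightarrow>
      real_of_ereal (Sup {ereal (\<Sum>j<n. c j * (\<Sum>l<k. P j l * y l)) | y.
         \<forall>i<m. (\<Sum>j<n. A i j * (\<Sum>l<k. P j l * y l)) \<le> b i}))"

definition proj_class :: "nat \<Rightarrow> nat \<Rightarrow> nat \<Rightarrow> (lp_instance \<Rightarrow> real) set" where
  "proj_class n k m = {proj_value n k m P | P. P \<in> matrices n k}"

definition pshatters :: "('a \<Rightarrow> real) set \<Rightarrow> 'a set \<Rightarrow> bool" where
  "pshatters F S = (\<exists>t :: 'a \<Rightarrow> real. \<forall>T \<subseteq> S. \<exists>f \<in> F. \<forall>x \<in> S. (t x \<le> f x \<longleftrightarrow> x \<in> T))"

definition pdim :: "('a \<Rightarrow> real) set \<Rightarrow> 'a set \<Rightarrow> ereal" where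
  "pdim F X = Sup {ereal (real (card S)) | S. S \<subseteq> X \<and> finite S \<and> pshatters F S}"

end

theory Submission
  imports Defs
begin

text \<open>Take m = 2k + 1 and, for k \<le> j < n and l < k, the LP instance that maximises x_j
  subject to 0 \<le> x_i \<le> [i = l] for i < k and x_j \<le> 1.  For a projection P = [I_k; B] with a
  0/1 matrix B, the projected variables are x_i = y_i for i < k and x_j = \<Sum>_l B_jl y_l, so the
  constraints force y = t e_l with 0 \<le> t \<le> 1 and the projected optimum is exactly B_jl.
  Letting B be the indicator of an arbitrary subset T of these (n - k) k \<ge> n k / 2 instances,
  the threshold 1 separates T from its complement, so they are pseudo-shattered.\<close>

lemma pdim_ge_card:
  assumes "S \<subseteq> X" and "finite S" and "pshatters F S"
  shows "ereal (real (card S)) \<le> pdim F X"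
  unfolding pdim_def by (rule Sup_upper) (use assms in blast)

lemma lp_value_le:
  assumes "\<And>x. lp_feasible n m \<pi> x \<Longrightarrow> (\<Sum>j<n. fst \<pi> j * x j) \<le> H"
  shows "lp_value n m \<pi> \<le> ereal H"
  using assms unfolding lp_value_def by (cases \<pi>) (auto intro!: Sup_least)

definition mat_vec :: "nat \<Rightarrow> (nat \<Rightarrow> nat \<Rightarrow> real) \<Rightarrow> (nat \<Rightarrow> real) \<Rightarrow> nat \<Rightarrow> real" where
  "mat_vec k P y = (\<lambda>j. \<Sum>l<k. P j l * y l)"

lemma proj_value_eq_maximum:
  assumes "lp_feasible n m \<pi> (mat_vec k P y\<^sub>0)"
    and "(\<Sum>j<n. fst \<pi> j * mat_vec k P y\<^sub>0 j) = v"
    and "\<And>y. lp_feasible n m \<pi> (mat_vec k P y) \<Longrightarrow> (\<Sum>j<n. fst \<pi> j * mat_vec k P y j) \<le> v"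
  shows "proj_value n k m P \<pi> = v"
proof -
  obtain c A b where \<pi>: "\<pi> = (c, A, b)" by (cases \<pi>)
  let ?S = "{ereal (\<Sum>j<n. c j * mat_vec k P y j) | y. lp_feasible n m \<pi> (mat_vec k P y)}"
  have "Sup ?S = ereal v"
    by (rule cSup_eq_maximum) (use assms \<pi> in \<open>auto intro!: exI[of _ y\<^sub>0]\<close>)
  then show ?thesis
    unfolding proj_value_def lp_feasible_def mat_vec_def \<pi> by simp
qed

definition unit_vec :: "nat \<Rightarrow> nat \<Rightarrow> real" where
  "unit_vec i = (\<lambda>j. if j = i then 1 else 0)"

lemma sum_unit_vec_mult: "i \<in> S \<Longrightarrow> finite S \<Longrightarrow> (\<Sum>j\<in>S. unit_vec i j * z j) = z i"
  unfolding unit_vec_def by (simp add: if_distrib[of "\<lambda>a. a * _"] cong: if_cong)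

definition hard_instance :: "nat \<Rightarrow> nat \<Rightarrow> nat \<Rightarrow> lp_instance" where
  "hard_instance k j l =
    (unit_vec j,
     \<lambda>i. if i < k then unit_vec i
         else if i < 2 * k then (\<lambda>j'. - unit_vec (i - k) j')
         else if i = 2 * k then unit_vec j
         else (\<lambda>_. 0),
     \<lambda>i. if i = l \<or> i = 2 * k then 1 else 0)"

lemma fst_hard_instance [simp]: "fst (hard_instance k j l) = unit_vec j"
  by (simp add: hard_instance_def)

lemma all_less_double_Suc_iff:
  fixes Q :: "nat \<Rightarrow> bool"
  shows "(\<forall>i < 2 * k + 1. Q i) \<longleftrightarrow> (\<forall>i < k. Q i) \<and> (\<forall>i < k. Q (k + i)) \<and> Q (2 * k)"
proof -
  have "Q i" if "\<forall>i < k. Q i" "\<forall>i < k. Q (k + i)" "Q (2 * k)" "i < 2 * k + 1" for i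
    using that by (cases "i < k"; cases "i = 2 * k") (auto dest: spec[of _ "i - k"])
  then show ?thesis by auto
qed

lemma lp_feasible_hard_instance_iff:
  assumes "k \<le> n" and "j < n" and "l < k"
  shows "lp_feasible n (2 * k + 1) (hard_instance k j l) x \<longleftrightarrow>
    (\<forall>i < k. 0 \<le> x i \<and> x i \<le> unit_vec l i) \<and> x j \<le> 1"
  using assms unfolding lp_feasible_def hard_instance_def all_less_double_Suc_iff
  by (simp add: sum_unit_vec_mult sum_negf) (auto simp: unit_vec_def)

definition shattering_matrix :: "nat \<Rightarrow> nat \<Rightarrow> (nat \<Rightarrow> nat \<Rightarrow> bool) \<Rightarrow> nat \<Rightarrow> nat \<Rightarrow> real" where
  "shattering_matrix n k B =
    (\<lambda>j l. if j < n \<and> l < k then (if j < k then unit_vec j l else of_bool (B j l)) else 0)"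

lemma shattering_matrix_in_matrices: "shattering_matrix n k B \<in> matrices n k"
  unfolding matrices_def shattering_matrix_def by auto

lemma mat_vec_shattering_matrix_low:
  "i < k \<Longrightarrow> k \<le> n \<Longrightarrow> mat_vec k (shattering_matrix n k B) y i = y i"
  unfolding mat_vec_def shattering_matrix_def by (simp add: sum_unit_vec_mult)

lemma mat_vec_shattering_matrix_high:
  "k \<le> j \<Longrightarrow> j < n \<Longrightarrow> mat_vec k (shattering_matrix n k B) y j = (\<Sum>l<k. of_bool (B j l) * y l)"
  unfolding mat_vec_def shattering_matrix_def by (intro sum.cong) auto

lemma proj_value_hard_instance:
  assumes "k \<le> j" and "j < n" and "l < k"
  shows "proj_value n k (2 * k + 1) (shattering_matrix n k B) (hard_instance k j l) = of_bool (B j l)"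
proof -
  let ?x = "mat_vec k (shattering_matrix n k B)"
  let ?row = "\<lambda>y. \<Sum>l'<k. of_bool (B j l') * y l'"
  have "k \<le> n" using assms by simp
  have feasible_iff: "lp_feasible n (2 * k + 1) (hard_instance k j l) (?x y) \<longleftrightarrow>
      (\<forall>i < k. 0 \<le> y i \<and> y i \<le> unit_vec l i) \<and> ?row y \<le> 1" for y
    unfolding lp_feasible_hard_instance_iff[OF \<open>k \<le> n\<close> \<open>j < n\<close> \<open>l < k\<close>]
    using assms by (simp add: mat_vec_shattering_matrix_low mat_vec_shattering_matrix_high)
  have objective: "(\<Sum>j'<n. fst (hard_instance k j l) j' * ?x y j') = ?row y" for y
    using assms by (simp add: sum_unit_vec_mult mat_vec_shattering_matrix_high)
  have row_unit_vec: "?row (unit_vec l) = of_bool (B j l)"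
    unfolding unit_vec_def using assms by (simp add: if_distrib[of "\<lambda>a. _ * a"] cong: if_cong)
  show ?thesis
  proof (rule proj_value_eq_maximum)
    show "lp_feasible n (2 * k + 1) (hard_instance k j l) (?x (unit_vec l))"
      using feasible_iff row_unit_vec by (simp add: unit_vec_def)
    show "(\<Sum>j'<n. fst (hard_instance k j l) j' * ?x (unit_vec l) j') = of_bool (B j l)"
      using objective row_unit_vec by simp
  next
    fix y assume "lp_feasible n (2 * k + 1) (hard_instance k j l) (?x y)"
    then have y_bounds: "\<forall>i < k. 0 \<le> y i \<and> y i \<le> unit_vec l i"
      using feasible_iff by blast
    then have "?row y = (\<Sum>l'<k. unit_vec l l' * (of_bool (B j l') * y l'))"
      by (intro sum.cong) (auto simp: unit_vec_def intro: antisym)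
    also have "\<dots> = of_bool (B j l) * y l"
      using assms by (simp add: sum_unit_vec_mult)
    also have "\<dots> \<le> of_bool (B j l)"
      using y_bounds[rule_format, OF \<open>l < k\<close>] by (simp add: unit_vec_def)
    finally show "(\<Sum>j'<n. fst (hard_instance k j l) j' * ?x y j') \<le> of_bool (B j l)"
      using objective by simp
  qed
qed

definition hard_instances :: "nat \<Rightarrow> nat \<Rightarrow> lp_instance set" where
  "hard_instances n k = (\<lambda>(j, l). hard_instance k j l) ` ({k..<n} \<times> {..<k})"

lemma hard_instances_subset: "hard_instances n k \<subseteq> lp_instances n (2 * k + 1)"
  unfolding hard_instances_def lp_instances_def hard_instance_def unit_vec_def by auto

lemma hard_instances_zero_feasible_bounded:
  assumes "\<pi> \<in> hard_instances n k"
  shows "lp_feasible n (2 * k + 1) \<pi> (\<lambda>_. 0) \<and> lp_value n (2 * k + 1) \<pi> \<le> ereal 1"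
proof -
  obtain j l where "k \<le> j" "j < n" "l < k" and \<pi>: "\<pi> = hard_instance k j l"
    using assms unfolding hard_instances_def by auto
  then have "k \<le> n" by simp
  note feasible_iff = lp_feasible_hard_instance_iff[OF \<open>k \<le> n\<close> \<open>j < n\<close> \<open>l < k\<close>]
  have "lp_feasible n (2 * k + 1) \<pi> (\<lambda>_. 0)"
    unfolding \<pi> feasible_iff by (simp add: unit_vec_def)
  moreover have "lp_value n (2 * k + 1) \<pi> \<le> ereal 1"
  proof (rule lp_value_le)
    fix x assume "lp_feasible n (2 * k + 1) \<pi> x"
    then have "x j \<le> 1" unfolding \<pi> feasible_iff ..
    then show "(\<Sum>j'<n. fst \<pi> j' * x j') \<le> 1"
      using \<open>j < n\<close> by (simp add: \<pi> sum_unit_vec_mult)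
  qed
  ultimately show ?thesis ..
qed

lemma card_hard_instances: "card (hard_instances n k) = (n - k) * k"
proof -
  have "inj_on (\<lambda>(j, l). hard_instance k j l) ({k..<n} \<times> {..<k})"
  proof (rule inj_onI, clarify)
    fix j l j' l' assume "l < k" and eq: "hard_instance k j l = hard_instance k j' l'"
    from eq have "fst (hard_instance k j l) j = fst (hard_instance k j' l') j"
      and "snd (snd (hard_instance k j l)) l = snd (snd (hard_instance k j' l')) l"
      by simp_all
    with \<open>l < k\<close> show "j = j' \<and> l = l'"
      by (auto simp: hard_instance_def unit_vec_def split: if_splits)
  qed
  then show ?thesis
    unfolding hard_instances_def by (simp add: card_image)
qed

lemma pshatters_hard_instances: "pshatters (proj_class n k (2 * k + 1)) (hard_instances n k)"
  unfolding pshatters_def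
proof (intro exI[of _ "\<lambda>_. 1"] allI impI)
  fix T assume "T \<subseteq> hard_instances n k"
  define B where "B j l \<longleftrightarrow> hard_instance k j l \<in> T" for j l
  have "1 \<le> proj_value n k (2 * k + 1) (shattering_matrix n k B) \<pi> \<longleftrightarrow> \<pi> \<in> T"
    if \<pi>_mem: "\<pi> \<in> hard_instances n k" for \<pi>
  proof -
    obtain j l where "k \<le> j" "j < n" "l < k" and "\<pi> = hard_instance k j l"
      using \<pi>_mem unfolding hard_instances_def by auto
    then show ?thesis
      using proj_value_hard_instance[of k j n l B] by (simp add: B_def)
  qed
  moreover have "proj_value n k (2 * k + 1) (shattering_matrix n k B) \<in> proj_class n k (2 * k + 1)"
    unfolding proj_class_def using shattering_matrix_in_matrices by blast
  ultimately show "\<exists>f \<in> proj_class n k (2 * k + 1). \<forall>\<pi> \<in> hard_instances n k. 1 \<le> f \<pi> \<longleftrightarrow> \<pi> \<in> T"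
    by blast
qed

theorem theorem2:
  shows "\<exists>C :: real. C > 0 \<and>
    (\<forall>n k :: nat. 0 < n \<longrightarrow> 0 < k \<longrightarrow> 3 * k \<le> n \<longrightarrow>
      (\<exists>m :: nat. 0 < m \<and> (\<exists>H :: real. H > 0 \<and> (\<exists>Insts :: lp_instance set.
         Insts \<subseteq> lp_instances n m \<and>
         (\<forall>\<pi> \<in> Insts. lp_feasible n m \<pi> (\<lambda>_. 0) \<and> lp_value n m \<pi> \<le> ereal H) \<and>
         pdim (proj_class n k m) Insts \<ge> ereal (C * real n * real k)))))"
proof (intro exI[of _ "1 / 2"] conjI allI impI)
  fix n k :: nat assume "0 < n" "0 < k" "3 * k \<le> n"
  have "1 / 2 * real n * real k \<le> real ((n - k) * k)"
    using \<open>3 * k \<le> n\<close> mult_right_mono[of "real n" "2 * (real n - real k)" "real k"]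
    by (simp add: of_nat_diff algebra_simps)
  also have "\<dots> \<le> pdim (proj_class n k (2 * k + 1)) (hard_instances n k)"
    using pdim_ge_card[OF order_refl _ pshatters_hard_instances] card_hard_instances
    by (simp add: hard_instances_def)
  finally show "\<exists>m > 0. \<exists>H > 0. \<exists>Insts \<subseteq> lp_instances n m.
      (\<forall>\<pi> \<in> Insts. lp_feasible n m \<pi> (\<lambda>_. 0) \<and> lp_value n m \<pi> \<le> ereal H) \<and>
      ereal (1 / 2 * real n * real k) \<le> pdim (proj_class n k m) Insts"
    using hard_instances_subset hard_instances_zero_feasible_bounded
    by (intro exI[of _ "2 * k + 1"] exI[of _ "1 :: real"] exI[of _ "hard_instances n k"] conjI) auto
qed simp

end
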